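(* Let $n\ge2$ and $k\in\{2,\dots,n\}$. Then $$\Lambda_n+(-1)^k\sum_{\pi\in\mathcal M_n^k}\pi(\Lambda_n)\equiv0\pmod{R(n)}.$$
   Context: An $n$-graph is an oriented graph with vertex set $\{1,\dots,n\}$, without loops but possibly with multiple edges; $\mathcal G(n)$ is the set of $n$-graphs and $\mathbb F\mathcal G(n)$ the vector space over a field $\mathbb F$ (characteristic $0$) with basis $\mathcal G(n)$. $R(n)$ is the subspace spanned by: (i) every $\Gamma$ containing a cycle of its underlying unoriented multigraph (two edges joining the same two vertices count as a cycle); (ii) every sum $\sum_{e\in C}\Gamma\setminus e$ with $C\subset E(\Gamma)$ an oriented cycle and $\Gamma\setminus e$ the graph with $e$ removed. $\equiv$ means equality in $\mathbb F\mathcal G(n)/R(n)$. $\Lambda_n$ is the $n$-graph with edges $1\to2,\dots,(n-1)\to n$. For $\sigma\in S_n$, $\sigma(\Gamma)$ is $\Gamma$ with vertex $i$ relabeled $\sigma(i)$ (edge $i\to j$ becomes $\sigma(i)\to\sigma(j)$). A permutation $\pi\in S_n$ is monotone if for each $i$ either $\pi(j)<\pi(i)$ for all $j<i$ or $\pi(j)>\pi(i)$ for all $j<i$; $\mathcal M_n^k$ is the set of monotone permutations with $\pi(1)=k$. *)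

theory Defs
  imports Main HOL.Modules "HOL-Library.Multiset" "HOL-Library.Function_Algebras"
    "HOL-Combinatorics.Permutations"
begin

text \<open>A graph is a multiset of oriented edges (i,j), meaning i \<rightarrow> j.\<close>
type_synonym graph = "(nat \<times> nat) multiset"

definition is_ngraph :: "nat \<Rightarrow> graph \<Rightarrow> bool" where
  "is_ngraph n G \<longleftrightarrow> (\<forall>e \<in># G. fst e \<in> {1..n} \<and> snd e \<in> {1..n} \<and> fst e \<noteq> snd e)"

text \<open>The underlying unoriented multigraph contains a cycle: either two edges join
  the same two vertices, or there is a cycle through at least three distinct vertices.\<close>
definition has_ucycle :: "graph \<Rightarrow> bool" where
  "has_ucycle G \<longleftrightarrow>
     (\<exists>i j. count G (i, j) + count G (j, i) \<ge> 2) \<or>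
     (\<exists>vs. distinct vs \<and> length vs \<ge> 3 \<and>
        (\<forall>i < length vs. (vs ! i, vs ! ((i + 1) mod length vs)) \<in># G \<or>
                         (vs ! ((i + 1) mod length vs), vs ! i) \<in># G))"

definition is_ocycle :: "(nat \<times> nat) set \<Rightarrow> bool" where
  "is_ocycle C \<longleftrightarrow> (\<exists>vs. distinct vs \<and> length vs \<ge> 2 \<and>
      C = {(vs ! i, vs ! ((i + 1) mod length vs)) | i. i < length vs})"

text \<open>Basis vector of a graph in the free vector space (finitely supported functions).\<close>
definition gvec :: "graph \<Rightarrow> graph \<Rightarrow> 'a::field" where
  "gvec G = (\<lambda>H. if H = G then 1 else 0)"

definition smul :: "'a::field \<Rightarrow> (graph \<Rightarrow> 'a) \<Rightarrow> graph \<Rightarrow> 'a" where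
  "smul c v = (\<lambda>H. c * v H)"

definition Rgens :: "nat \<Rightarrow> (graph \<Rightarrow> 'a::field) set" where
  "Rgens n =
     {gvec G | G. is_ngraph n G \<and> has_ucycle G} \<union>
     {(\<Sum>e\<in>C. gvec (G - {#e#})) | G C. is_ngraph n G \<and> is_ocycle C \<and> C \<subseteq> set_mset G}"

definition Rspace :: "nat \<Rightarrow> (graph \<Rightarrow> 'a::field) set" where
  "Rspace n = module.span smul (Rgens n)"

definition Lambda :: "nat \<Rightarrow> graph" where
  "Lambda n = mset (map (\<lambda>i. (i, Suc i)) [1..<n])"

definition relabel :: "(nat \<Rightarrow> nat) \<Rightarrow> graph \<Rightarrow> graph" where
  "relabel \<sigma> G = image_mset (\<lambda>(i, j). (\<sigma> i, \<sigma> j)) G"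

definition monotone_perm :: "nat \<Rightarrow> (nat \<Rightarrow> nat) \<Rightarrow> bool" where
  "monotone_perm n \<pi> \<longleftrightarrow> \<pi> permutes {1..n} \<and>
     (\<forall>i \<in> {1..n}. (\<forall>j \<in> {1..<i}. \<pi> j < \<pi> i) \<or> (\<forall>j \<in> {1..<i}. \<pi> j > \<pi> i))"

definition Mnk :: "nat \<Rightarrow> nat \<Rightarrow> (nat \<Rightarrow> nat) set" where
  "Mnk n k = {\<pi>. monotone_perm n \<pi> \<and> \<pi> 1 = k}"

end

theory Submission
  imports Defs
begin

(* Modulo R(n), reversing an edge changes the sign (2-cycle relation), and the 3-cycle relation
   lets the root r of two paths r -> L and r -> R be pushed forward: the union of the two paths is
   congruent to the sum, over all shuffles s of L and R, of the single path r -> s.  Write Lambda_n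
   as the path 1 -> ... -> k followed by k -> k+1 -> ... -> n and reverse the first part; this gives
   (-1)^(k-1) times the two paths k -> k-1 -> ... -> 1 and k -> k+1 -> ... -> n out of k.  Its
   shuffle expansion is exactly the sum of the pi(Lambda_n) over pi in M_n^k, because a permutation
   with pi(1) = k is monotone iff (pi(2), ..., pi(n)) is a shuffle of (k-1, ..., 1) and
   (k+1, ..., n). *)

lemma module_smul: "module (smul :: 'a::field \<Rightarrow> (graph \<Rightarrow> 'a) \<Rightarrow> graph \<Rightarrow> 'a)"
  by unfold_locales (simp_all add: smul_def fun_eq_iff algebra_simps)

definition Rcong :: "(graph \<Rightarrow> 'a::field) \<Rightarrow> nat \<Rightarrow> (graph \<Rightarrow> 'a) \<Rightarrow> bool"
    (\<open>(_ \<simeq>\<^bsub>_\<^esub> _)\<close> [51, 0, 51] 50) where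
  "x \<simeq>\<^bsub>n\<^esub> y \<longleftrightarrow> x - y \<in> Rspace n"

lemma Rcong_refl: "x \<simeq>\<^bsub>n\<^esub> x"
  unfolding Rcong_def Rspace_def by (simp add: module.span_zero[OF module_smul])

lemma Rcong_uminus: "- x \<simeq>\<^bsub>n\<^esub> - y" if "x \<simeq>\<^bsub>n\<^esub> y"
proof -
  have "- (x - y) \<in> Rspace n"
    using that unfolding Rcong_def Rspace_def by (rule module.span_neg[OF module_smul])
  then show ?thesis
    by (simp add: Rcong_def)
qed

lemma Rcong_sym: "y \<simeq>\<^bsub>n\<^esub> x" if "x \<simeq>\<^bsub>n\<^esub> y"
  using Rcong_uminus[OF that] by (simp add: Rcong_def algebra_simps)

lemma Rcong_add: "x + x' \<simeq>\<^bsub>n\<^esub> y + y'" if "x \<simeq>\<^bsub>n\<^esub> y" and "x' \<simeq>\<^bsub>n\<^esub> y'"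
proof -
  have "(x - y) + (x' - y') \<in> Rspace n"
    using that unfolding Rcong_def Rspace_def by (rule module.span_add[OF module_smul])
  then show ?thesis
    by (simp add: Rcong_def algebra_simps)
qed

lemma Rcong_trans [trans]: "x \<simeq>\<^bsub>n\<^esub> z" if "x \<simeq>\<^bsub>n\<^esub> y" and "y \<simeq>\<^bsub>n\<^esub> z"
  using Rcong_add[OF that] by (simp add: Rcong_def)

lemma eq_Rcong_trans [trans]: "x = y \<Longrightarrow> y \<simeq>\<^bsub>n\<^esub> z \<Longrightarrow> x \<simeq>\<^bsub>n\<^esub> z"
  and Rcong_eq_trans [trans]: "x \<simeq>\<^bsub>n\<^esub> y \<Longrightarrow> y = z \<Longrightarrow> x \<simeq>\<^bsub>n\<^esub> z"
  by simp_all

lemma Rcong_smul: "smul c x \<simeq>\<^bsub>n\<^esub> smul c y" if "x \<simeq>\<^bsub>n\<^esub> y"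
proof -
  have "smul c (x - y) \<in> Rspace n"
    using that unfolding Rcong_def Rspace_def by (rule module.span_scale[OF module_smul])
  moreover have "smul c (x - y) = smul c x - smul c y"
    by (simp add: smul_def fun_eq_iff algebra_simps)
  ultimately show ?thesis
    by (simp add: Rcong_def)
qed

lemma Rcong_0_iff: "x \<simeq>\<^bsub>n\<^esub> 0 \<longleftrightarrow> x \<in> Rspace n"
  by (simp add: Rcong_def)

lemma Rcong_cycle:
  assumes "is_ngraph n G" and "is_ocycle C" and "C \<subseteq> set_mset G"
  shows "(\<Sum>e\<in>C. gvec (G - {#e#})) \<simeq>\<^bsub>n\<^esub> 0"
  unfolding Rcong_0_iff Rspace_def
  by (rule module.span_base[OF module_smul]) (use assms in \<open>auto simp: Rgens_def\<close>)

lemma is_ngraph_add_mset [simp]: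
  "is_ngraph n (add_mset e G) \<longleftrightarrow> fst e \<in> {1..n} \<and> snd e \<in> {1..n} \<and> fst e \<noteq> snd e \<and> is_ngraph n G"
  by (auto simp: is_ngraph_def)

lemma is_ngraph_plus [simp]: "is_ngraph n (G + H) \<longleftrightarrow> is_ngraph n G \<and> is_ngraph n H"
  by (auto simp: is_ngraph_def)

lemma is_ngraph_empty [simp]: "is_ngraph n {#}"
  by (simp add: is_ngraph_def)

lemma Rcong_reverse_edge:
  assumes "is_ngraph n G" and "i \<in> {1..n}" and "j \<in> {1..n}" and "i \<noteq> j"
  shows "gvec (add_mset (i, j) G) \<simeq>\<^bsub>n\<^esub> - gvec (add_mset (j, i) G)"
proof -
  let ?C = "{(i, j), (j, i)}" and ?G = "add_mset (i, j) (add_mset (j, i) G)"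
  have "is_ocycle ?C"
    unfolding is_ocycle_def
    by (rule exI[of _ "[i, j]"]) (use assms in \<open>auto simp: setcompr_eq_image lessThan_def[symmetric] lessThan_Suc\<close>)
  then have "(\<Sum>e\<in>?C. gvec (?G - {#e#})) \<simeq>\<^bsub>n\<^esub> 0"
    using assms by (intro Rcong_cycle) auto
  then show ?thesis
    using assms(4) by (simp add: Rcong_def add_mset_commute add.commute)
qed

lemma Rcong_triangle:
  assumes "is_ngraph n G" and "a \<in> {1..n}" and "b \<in> {1..n}" and "c \<in> {1..n}"
    and "a \<noteq> b" and "b \<noteq> c" and "a \<noteq> c"
  shows "gvec (add_mset (b, c) (add_mset (c, a) G)) \<simeq>\<^bsub>n\<^esub>
           - (gvec (add_mset (a, b) (add_mset (c, a) G)) + gvec (add_mset (a, b) (add_mset (b, c) G)))"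
proof -
  let ?C = "{(a, b), (b, c), (c, a)}" and ?G = "add_mset (a, b) (add_mset (b, c) (add_mset (c, a) G))"
  have "is_ocycle ?C"
    unfolding is_ocycle_def
    by (rule exI[of _ "[a, b, c]"]) (use assms in \<open>auto simp: setcompr_eq_image lessThan_def[symmetric] lessThan_Suc\<close>)
  then have "(\<Sum>e\<in>?C. gvec (?G - {#e#})) \<simeq>\<^bsub>n\<^esub> 0"
    using assms by (intro Rcong_cycle) auto
  then show ?thesis
    using assms(5-7) by (simp add: Rcong_def add_mset_commute algebra_simps)
qed

fun path_graph :: "nat list \<Rightarrow> graph" where
  "path_graph (x # y # ys) = add_mset (x, y) (path_graph (y # ys))"
| "path_graph _ = {#}"

lemma is_ngraph_path_graph: "distinct xs \<Longrightarrow> set xs \<subseteq> {1..n} \<Longrightarrow> is_ngraph n (path_graph xs)"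
  by (induction xs rule: path_graph.induct) auto

lemma path_graph_snoc: "xs \<noteq> [] \<Longrightarrow> path_graph (xs @ [y]) = add_mset (last xs, y) (path_graph xs)"
  by (induction xs rule: path_graph.induct) auto

lemma path_graph_append: "path_graph (xs @ y # ys) = path_graph (xs @ [y]) + path_graph (y # ys)"
  by (induction xs rule: path_graph.induct) auto

lemma relabel_path_graph: "relabel p (path_graph xs) = path_graph (map p xs)"
  by (induction xs rule: path_graph.induct) (auto simp: relabel_def)

lemma Rcong_path_graph_rev:
  assumes "is_ngraph n G" and "distinct xs" and "set xs \<subseteq> {1..n}"
  shows "gvec (G + path_graph xs) \<simeq>\<^bsub>n\<^esub> smul ((-1) ^ (length xs - 1)) (gvec (G + path_graph (rev xs)))"
  using assms
proof (induction xs arbitrary: G rule: path_graph.induct)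
  case (1 x y ys)
  let ?P = "path_graph (rev (y # ys))" and ?s = "(-1) ^ length ys"
  have "(gvec (G + path_graph (x # y # ys)) :: graph \<Rightarrow> 'a) = gvec (add_mset (x, y) G + path_graph (y # ys))"
    by simp
  also have "\<dots> \<simeq>\<^bsub>n\<^esub> smul ?s (gvec (add_mset (x, y) (G + ?P)))"
    using "1.IH"[of "add_mset (x, y) G"] "1.prems" by simp
  also have "\<dots> \<simeq>\<^bsub>n\<^esub> smul ?s (- gvec (add_mset (y, x) (G + ?P)))"
    using "1.prems" is_ngraph_path_graph[of "rev (y # ys)" n]
    by (intro Rcong_smul Rcong_reverse_edge) auto
  also have "\<dots> = smul ((-1) ^ (length (x # y # ys) - 1)) (gvec (G + path_graph (rev (x # y # ys))))"
    using path_graph_snoc[of "rev (y # ys)" x] by (simp add: smul_def)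
  finally show ?case .
qed (simp_all add: smul_def Rcong_refl)

lemma sum_shuffles_Cons_Cons:
  assumes "l \<noteq> p"
  shows "(\<Sum>s\<in>shuffles (l # L) (p # R). f s) =
           (\<Sum>s\<in>shuffles L (p # R). f (l # s)) + (\<Sum>s\<in>shuffles (l # L) R. f (p # s))"
proof -
  have "(\<Sum>s\<in>shuffles (l # L) (p # R). f s) =
          (\<Sum>s\<in>(#) l ` shuffles L (p # R). f s) + (\<Sum>s\<in>(#) p ` shuffles (l # L) R. f s)"
    using assms by (simp only: shuffles.simps, intro sum.union_disjoint) auto
  then show ?thesis
    by (simp add: sum.reindex)
qed

lemma Rcong_shuffles:
  assumes "is_ngraph n G" and "distinct (r # L @ R)" and "set (r # L @ R) \<subseteq> {1..n}"
  shows "gvec (G + path_graph (r # L) + path_graph (r # R)) \<simeq>\<^bsub>n\<^esub>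
           (\<Sum>s\<in>shuffles L R. gvec (G + path_graph (r # s)))"
  using assms
proof (induction "length L + length R" arbitrary: G r L R rule: less_induct)
  case less
  show ?case
  proof (cases "L = [] \<or> R = []")
    case True
    then show ?thesis
      by (auto simp: Rcong_refl)
  next
    case False
    then obtain l L' p R' where LR: "L = l # L'" "R = p # R'"
      by (meson neq_Nil_conv)
    let ?H = "G + path_graph (l # L') + path_graph (p # R')"
    have H: "is_ngraph n ?H"
      using less.prems LR by (auto intro!: is_ngraph_path_graph)
    have vertices: "r \<in> {1..n}" "l \<in> {1..n}" "p \<in> {1..n}" "r \<noteq> l" "r \<noteq> p" "l \<noteq> p"
      using less.prems LR by auto
    (* Flip r -> p, apply the triangle relation to r -> l -> p -> r, then flip p -> r back and
       l -> p: the two root edges r -> l, r -> p become r -> l -> p or r -> p -> l. *)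
    have "(gvec (G + path_graph (r # L) + path_graph (r # R)) :: graph \<Rightarrow> 'a)
            = gvec (add_mset (r, p) (add_mset (r, l) ?H))"
      by (simp add: LR add_mset_commute)
    also have "\<dots> \<simeq>\<^bsub>n\<^esub> - gvec (add_mset (p, r) (add_mset (r, l) ?H))"
      using H vertices by (intro Rcong_reverse_edge) auto
    also have "\<dots> \<simeq>\<^bsub>n\<^esub> gvec (add_mset (l, p) (add_mset (p, r) ?H)) + gvec (add_mset (l, p) (add_mset (r, l) ?H))"
      using Rcong_uminus[OF Rcong_triangle[OF H, of l p r]] vertices by (simp add: add_mset_commute)
    also have "\<dots> \<simeq>\<^bsub>n\<^esub> - gvec (add_mset (r, p) (add_mset (l, p) ?H)) + gvec (add_mset (l, p) (add_mset (r, l) ?H))"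
      using Rcong_reverse_edge[of n "add_mset (l, p) ?H" p r] H vertices
      by (intro Rcong_add Rcong_refl) (simp add: add_mset_commute)
    also have "\<dots> \<simeq>\<^bsub>n\<^esub> gvec (add_mset (p, l) (add_mset (r, p) ?H)) + gvec (add_mset (l, p) (add_mset (r, l) ?H))"
      using Rcong_reverse_edge[of n "add_mset (r, p) ?H" p l] H vertices
      by (intro Rcong_add[OF Rcong_sym] Rcong_refl) (simp add: add_mset_commute)
    also have "\<dots> = gvec (add_mset (r, p) G + path_graph (p # L) + path_graph (p # R'))
                   + gvec (add_mset (r, l) G + path_graph (l # L') + path_graph (l # R))"
      by (simp add: LR add_mset_commute)
    also have "\<dots> \<simeq>\<^bsub>n\<^esub> (\<Sum>s\<in>shuffles L R'. gvec (add_mset (r, p) G + path_graph (p # s)))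
                   + (\<Sum>s\<in>shuffles L' R. gvec (add_mset (r, l) G + path_graph (l # s)))"
      using less.prems vertices LR by (intro Rcong_add less.hyps) auto
    also have "\<dots> = (\<Sum>s\<in>shuffles L R. gvec (G + path_graph (r # s)))"
      unfolding LR sum_shuffles_Cons_Cons[OF vertices(6)] by (subst add.commute) simp
    finally show ?thesis .
  qed
qed

definition outward :: "'a::linorder \<Rightarrow> 'a \<Rightarrow> 'a \<Rightarrow> bool" where
  "outward k a b \<longleftrightarrow> (k < b \<longrightarrow> a < b) \<and> (b < k \<longrightarrow> b < a)"

lemma sorted_wrt_outward_iff:
  "k \<notin> set s \<Longrightarrow> sorted_wrt (outward k) s \<longleftrightarrow>
     sorted_wrt (>) (filter (\<lambda>x. x < k) s) \<and> sorted_wrt (<) (filter (\<lambda>x. k < x) s)"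
  by (induction s) (auto simp: outward_def)

lemma strict_sorted_iff_eq:
  fixes xs ys :: "'a::linorder list"
  assumes "set xs = set ys" and "sorted_wrt (<) ys"
  shows "sorted_wrt (<) xs \<longleftrightarrow> xs = ys"
  using assms strict_sorted_equal[of ys xs] by auto

lemma in_shuffles_iff_sorted_wrt_outward:
  fixes s :: "nat list"
  assumes "set s = {1..n} - {k}" and "k \<le> n"
  shows "s \<in> shuffles (rev [1..<k]) [Suc k..<Suc n] \<longleftrightarrow> sorted_wrt (outward k) s"
proof -
  have below: "set (filter (\<lambda>x. x < k) s) = {1..<k}"
    and above: "set (filter (\<lambda>x. k < x) s) = {Suc k..<Suc n}"
    using assms unfolding set_filter by (simp_all add: set_eq_iff) linarith+
  have split_low: "filter (\<lambda>x. x \<in> set (rev [1..<k])) s = filter (\<lambda>x. x < k) s"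
    and split_high: "filter (\<lambda>x. x \<notin> set (rev [1..<k])) s = filter (\<lambda>x. k < x) s"
    and split_not_low: "filter (\<lambda>x. \<not> x < k) s = filter (\<lambda>x. k < x) s"
    by (rule filter_cong[OF refl]; use assms(1) in \<open>simp add: nat_neq_iff\<close>; linarith)+
  have "s \<in> shuffles (rev [1..<k]) [Suc k..<Suc n] \<longleftrightarrow>
          filter (\<lambda>x. x < k) s = rev [1..<k] \<and> filter (\<lambda>x. k < x) s = [Suc k..<Suc n]"
  proof
    assume "s \<in> shuffles (rev [1..<k]) [Suc k..<Suc n]"
    from filter_shuffles_disjoint1[OF _ this]
    show "filter (\<lambda>x. x < k) s = rev [1..<k] \<and> filter (\<lambda>x. k < x) s = [Suc k..<Suc n]"
      unfolding split_low split_high by (simp del: upt_Suc)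
  next
    assume "filter (\<lambda>x. x < k) s = rev [1..<k] \<and> filter (\<lambda>x. k < x) s = [Suc k..<Suc n]"
    then show "s \<in> shuffles (rev [1..<k]) [Suc k..<Suc n]"
      using partition_in_shuffles[of s "\<lambda>x. x < k"] unfolding split_not_low by simp
  qed
  also have "\<dots> \<longleftrightarrow> sorted_wrt (>) (filter (\<lambda>x. x < k) s) \<and> sorted_wrt (<) (filter (\<lambda>x. k < x) s)"
    using strict_sorted_iff_eq[of "rev (filter (\<lambda>x. x < k) s)" "[1..<k]"]
      strict_sorted_iff_eq[of "filter (\<lambda>x. k < x) s" "[Suc k..<Suc n]"] below above
    by (simp add: sorted_wrt_rev rev_swap del: upt_Suc)
  also have "\<dots> \<longleftrightarrow> sorted_wrt (outward k) s"
    using assms(1) by (simp add: sorted_wrt_outward_iff)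
  finally show ?thesis .
qed

lemma upt_1_Suc: "1 \<le> n \<Longrightarrow> [1..<Suc n] = 1 # [2..<Suc n]"
  using upt_conv_Cons[of 1 "Suc n"] by (simp add: numeral_2_eq_2 del: upt_Suc)

lemma sorted_wrt_upt_iff: "sorted_wrt R [m..<n] \<longleftrightarrow> (\<forall>i j. m \<le> i \<longrightarrow> i < j \<longrightarrow> j < n \<longrightarrow> R i j)"
  by (induction n) (auto simp: sorted_wrt_append less_Suc_eq)

lemma monotone_perm_iff_sorted_wrt_outward:
  assumes perm: "p permutes {1..n}" and first: "p 1 = k"
  shows "monotone_perm n p \<longleftrightarrow> sorted_wrt (outward k) (map p [2..<Suc n])"
proof -
  have records: "(\<forall>j\<in>{1..<i}. p j < p i) \<or> (\<forall>j\<in>{1..<i}. p j > p i) \<longleftrightarrow>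
                   (\<forall>j\<in>{2..<i}. outward k (p j) (p i))" if i: "i \<in> {1..n}" for i
  proof (cases "i = 1")
    case False
    then have "p i \<noteq> k"
      using inj_onD[OF permutes_inj_on[OF perm], of i 1] i first by auto
    moreover have "{1..<i} = insert 1 {2..<i}"
      using i False by auto
    ultimately show ?thesis
      using first by (cases "p i < k") (auto simp: outward_def)
  qed simp
  have "monotone_perm n p \<longleftrightarrow> (\<forall>i\<in>{1..n}. \<forall>j\<in>{2..<i}. outward k (p j) (p i))"
    using perm records by (simp add: monotone_perm_def)
  also have "\<dots> \<longleftrightarrow> sorted_wrt (outward k) (map p [2..<Suc n])"
    unfolding sorted_wrt_map sorted_wrt_upt_iff by auto
  finally show ?thesis .
qed

lemma obtain_permutes_map_upt:
  assumes "distinct xs" and "set xs = {1..length xs}"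
  obtains p where "p permutes {1..length xs}" and "map p [1..<Suc (length xs)] = xs"
proof
  define p where "p x = (if x \<in> {1..length xs} then xs ! (x - 1) else x)" for x
  show "map p [1..<Suc (length xs)] = xs"
    by (rule nth_equalityI) (simp_all add: p_def del: upt_Suc)
  have "inj_on p {1..length xs}"
    using assms(1) by (auto intro!: inj_onI simp: p_def nth_eq_iff_index_eq)
  moreover have "p ` {1..length xs} \<subseteq> {1..length xs}"
    using assms(2) nth_mem by (fastforce simp: p_def)
  ultimately have "bij_betw p {1..length xs} {1..length xs}"
    by (simp add: bij_betw_def endo_inj_surj)
  then show "p permutes {1..length xs}"
    by (rule bij_imp_permutes) (auto simp: p_def)
qed

lemma permutes_map_upt_inject:
  assumes "p permutes {1..n}" and "q permutes {1..n}" and "map p [1..<Suc n] = map q [1..<Suc n]"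
  shows "p = q"
proof
  fix x
  show "p x = q x"
  proof (cases "x \<in> {1..n}")
    case True
    then show ?thesis
      using assms(3) by (simp add: map_eq_conv del: upt_Suc)
  next
    case False
    then show ?thesis
      using assms(1,2) by (simp add: permutes_not_in)
  qed
qed

lemma bij_betw_Mnk_shuffles:
  assumes "1 \<le> k" and "k \<le> n"
  shows "bij_betw (\<lambda>p. map p [2..<Suc n]) (Mnk n k) (shuffles (rev [1..<k]) [Suc k..<Suc n])"
proof -
  have upt: "[1..<Suc n] = 1 # [2..<Suc n]"
    using assms by (intro upt_1_Suc) simp
  have Mnk_perm: "p permutes {1..n}" "p 1 = k" if "p \<in> Mnk n k" for p
    using that by (simp_all add: Mnk_def monotone_perm_def)
  have Mnk_iff: "p \<in> Mnk n k \<longleftrightarrow> map p [2..<Suc n] \<in> shuffles (rev [1..<k]) [Suc k..<Suc n]"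
    if perm: "p permutes {1..n}" and first: "p 1 = k" for p
  proof -
    have "distinct (map p [1..<Suc n])" and "set (map p [1..<Suc n]) = {1..n}"
      using perm by (simp_all add: distinct_map permutes_inj_on permutes_image
                                   atLeastLessThanSuc_atLeastAtMost del: upt_Suc)
    then have "distinct (k # map p [2..<Suc n])" and "set (k # map p [2..<Suc n]) = {1..n}"
      by (simp_all only: upt list.map first)
    then have tail: "set (map p [2..<Suc n]) = {1..n} - {k}"
      by (metis Diff_insert_absorb distinct.simps(2) list.simps(15))
    have "p \<in> Mnk n k \<longleftrightarrow> monotone_perm n p"
      using first by (simp add: Mnk_def)
    also have "\<dots> \<longleftrightarrow> sorted_wrt (outward k) (map p [2..<Suc n])"
      by (rule monotone_perm_iff_sorted_wrt_outward[OF perm first])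
    also have "\<dots> \<longleftrightarrow> map p [2..<Suc n] \<in> shuffles (rev [1..<k]) [Suc k..<Suc n]"
      by (rule in_shuffles_iff_sorted_wrt_outward[OF tail assms(2), symmetric])
    finally show ?thesis .
  qed
  have "inj_on (\<lambda>p. map p [2..<Suc n]) (Mnk n k)"
  proof (rule inj_onI)
    fix p q
    assume p: "p \<in> Mnk n k" and q: "q \<in> Mnk n k" and eq: "map p [2..<Suc n] = map q [2..<Suc n]"
    have "map p [1..<Suc n] = map q [1..<Suc n]"
      unfolding upt using eq Mnk_perm(2)[OF p] Mnk_perm(2)[OF q] by (simp del: upt_Suc)
    then show "p = q"
      using permutes_map_upt_inject Mnk_perm(1)[OF p] Mnk_perm(1)[OF q] by blast
  qed
  moreover have "(\<lambda>p. map p [2..<Suc n]) ` Mnk n k = shuffles (rev [1..<k]) [Suc k..<Suc n]"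
  proof
    show "(\<lambda>p. map p [2..<Suc n]) ` Mnk n k \<subseteq> shuffles (rev [1..<k]) [Suc k..<Suc n]"
      using Mnk_iff Mnk_perm by blast
  next
    show "shuffles (rev [1..<k]) [Suc k..<Suc n] \<subseteq> (\<lambda>p. map p [2..<Suc n]) ` Mnk n k"
    proof
      fix s
      assume s: "s \<in> shuffles (rev [1..<k]) [Suc k..<Suc n]"
      have "distinct (k # s)"
        using distinct_disjoint_shuffles[OF _ _ _ s] set_shuffles[OF s] by (auto simp del: upt_Suc)
      moreover have "length (k # s) = n"
        using length_shuffles[OF s] assms by (simp del: upt_Suc)
      moreover have "{1..n} = insert k ({1..<k} \<union> {Suc k..<Suc n})"
        using assms by (auto simp: atLeastLessThanSuc_atLeastAtMost)
      then have "set (k # s) = {1..n}"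
        using set_shuffles[OF s] by (simp del: upt_Suc)
      ultimately obtain p where p: "p permutes {1..n}" and "map p [1..<Suc n] = k # s"
        using obtain_permutes_map_upt by metis
      then have "p 1 = k" and "map p [2..<Suc n] = s"
        unfolding upt by (simp_all del: upt_Suc)
      then show "s \<in> (\<lambda>p. map p [2..<Suc n]) ` Mnk n k"
        using Mnk_iff[OF p] s by blast
    qed
  qed
  ultimately show ?thesis
    by (simp add: bij_betw_def)
qed

lemma Lambda_eq_path_graph: "Lambda n = path_graph [1..<Suc n]"
proof (induction n)
  case (Suc n)
  show ?case
  proof (cases n)
    case (Suc m)
    then show ?thesis
      using Suc.IH path_graph_snoc[of "[1..<Suc n]" "Suc n"] by (simp add: Lambda_def)
  qed (simp add: Lambda_def)
qed (simp add: Lambda_def)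

lemma Lambda_split:
  assumes "1 \<le> k" and "k \<le> n"
  shows "Lambda n = path_graph [1..<Suc k] + path_graph (k # [Suc k..<Suc n])"
proof -
  have "[1..<Suc n] = [1..<k] @ [k..<Suc n]"
    using upt_add_eq_append[of 1 k "Suc n - k"] assms by (simp del: upt_Suc)
  also have "[k..<Suc n] = k # [Suc k..<Suc n]"
    using assms by (simp add: upt_conv_Cons del: upt_Suc)
  finally have split: "[1..<Suc n] = [1..<k] @ k # [Suc k..<Suc n]" .
  have prefix: "[1..<Suc k] = [1..<k] @ [k]"
    using assms(1) by simp
  show ?thesis
    unfolding Lambda_eq_path_graph split prefix by (rule path_graph_append)
qed

lemma sum_Mnk_relabel_Lambda:
  assumes "1 \<le> k" and "k \<le> n"
  shows "(\<Sum>\<pi>\<in>Mnk n k. gvec (relabel \<pi> (Lambda n))) =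
           (\<Sum>s\<in>shuffles (rev [1..<k]) [Suc k..<Suc n]. gvec (path_graph (k # s)))"
proof -
  have "(\<Sum>\<pi>\<in>Mnk n k. gvec (relabel \<pi> (Lambda n))) =
          (\<Sum>\<pi>\<in>Mnk n k. gvec (path_graph (k # map \<pi> [2..<Suc n])))"
  proof (rule sum.cong)
    fix \<pi> assume "\<pi> \<in> Mnk n k"
    then have "\<pi> 1 = k"
      by (simp add: Mnk_def)
    moreover have "[1..<Suc n] = 1 # [2..<Suc n]"
      using assms by (intro upt_1_Suc) simp
    ultimately show "gvec (relabel \<pi> (Lambda n)) = gvec (path_graph (k # map \<pi> [2..<Suc n]))"
      by (simp add: Lambda_eq_path_graph relabel_path_graph del: upt_Suc)
  qed simp
  also have "\<dots> = (\<Sum>s\<in>shuffles (rev [1..<k]) [Suc k..<Suc n]. gvec (path_graph (k # s)))"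
    by (rule sum.reindex_bij_betw[OF bij_betw_Mnk_shuffles[OF assms]])
  finally show ?thesis .
qed

theorem lemma4p8:
  fixes n k :: nat
  assumes "n \<ge> 2" and "2 \<le> k" and "k \<le> n"
  shows "(gvec (Lambda n) + smul ((-1) ^ k) (\<Sum>\<pi>\<in>Mnk n k. gvec (relabel \<pi> (Lambda n)))
           :: graph \<Rightarrow> 'a::field_char_0) \<in> Rspace n"
proof -
  define L where "L = rev [1..<k]"
  define R where "R = [Suc k..<Suc n]"
  define c :: 'a where "c = (-1) ^ (k - 1)"
  define S where "S = (\<Sum>\<pi>\<in>Mnk n k. gvec (relabel \<pi> (Lambda n)) :: graph \<Rightarrow> 'a)"
  have k_pos: "1 \<le> k"
    using assms(2) by simp
  have vertices_distinct: "distinct (k # L @ R)" and vertices_range: "set (k # L @ R) \<subseteq> {1..n}"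
    using assms by (auto simp: L_def R_def simp del: upt_Suc)
  have R_graph: "is_ngraph n (path_graph (k # R))"
    using vertices_distinct vertices_range by (intro is_ngraph_path_graph) auto
  have prefix_range: "set [1..<Suc k] \<subseteq> {1..n}"
    using assms(3) by (auto simp del: upt_Suc)
  have "gvec (Lambda n) = gvec (path_graph (k # R) + path_graph [1..<Suc k])"
    unfolding Lambda_split[OF k_pos assms(3)] R_def by (simp only: add.commute)
  also have "\<dots> \<simeq>\<^bsub>n\<^esub> smul c (gvec (path_graph (k # R) + path_graph (k # L)))"
    using Rcong_path_graph_rev[OF R_graph distinct_upt prefix_range] k_pos
    unfolding c_def L_def by simp
  also have "\<dots> \<simeq>\<^bsub>n\<^esub> smul c (\<Sum>s\<in>shuffles L R. gvec (path_graph (k # s)))"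
    using Rcong_shuffles[OF is_ngraph_empty vertices_distinct vertices_range]
    by (intro Rcong_smul) (simp add: add.commute)
  also have "\<dots> = smul c S"
    unfolding S_def L_def R_def sum_Mnk_relabel_Lambda[OF k_pos assms(3)] ..
  finally have "gvec (Lambda n) - smul c S \<in> Rspace n"
    by (simp add: Rcong_def)
  moreover have "smul ((-1) ^ k) S = - smul c S"
    using k_pos by (simp add: c_def smul_def fun_eq_iff power_eq_if)
  ultimately show ?thesis
    unfolding S_def by simp
qed

end
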